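(* Let $A$ be a symmetric finite collection of points of $[0,1]^2$, and let $x=(x_1,x_2)$ be an average fixed point of $A$. Then $x_1=x_2$.
   Context: A collection (multiset) $A=(a^k)_{k\in[n]}$ of points of $[0,1]^2$ is symmetric if for all $x_1,x_2$, $|\{k:a^k=(x_1,x_2)\}|=|\{k:a^k=(x_2,x_1)\}|$. For a finite nonempty multiset $B$, $\operatorname{avg}(B)$ is its arithmetic mean (with multiplicity). For $x\in[0,1]^2$: $A_{<,<}(x)=\{a\in A:a_1<x_1,a_2<x_2\}$ and $A_{\le,\le}(x)=\{a\in A:a_1\le x_1,a_2\le x_2\}$. A point $x$ is an average fixed point of $A$ if there exists a sub-multiset $B\subseteq A_{\le,\le}(x)\setminus A_{<,<}(x)$ such that $\operatorname{avg}\big((A\setminus A_{\le,\le}(x))\cup B\big)=x$. *)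

theory Defs
  imports Main "HOL-Library.Multiset" Complex_Main
begin

type_synonym pt = "real \<times> real"

definition in_unit_square :: "pt \<Rightarrow> bool" where
  "in_unit_square p \<longleftrightarrow> 0 \<le> fst p \<and> fst p \<le> 1 \<and> 0 \<le> snd p \<and> snd p \<le> 1"

definition symmetric_ms :: "pt multiset \<Rightarrow> bool" where
  "symmetric_ms A \<longleftrightarrow> (\<forall>x1 x2. count A (x1, x2) = count A (x2, x1))"

definition avg :: "pt multiset \<Rightarrow> pt" where
  "avg B = ((\<Sum>a\<in>#B. fst a) / real (size B), (\<Sum>a\<in>#B. snd a) / real (size B))"

definition A_lt_lt :: "pt multiset \<Rightarrow> pt \<Rightarrow> pt multiset" where
  "A_lt_lt A x = filter_mset (\<lambda>a. fst a < fst x \<and> snd a < snd x) A"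

definition A_le_le :: "pt multiset \<Rightarrow> pt \<Rightarrow> pt multiset" where
  "A_le_le A x = filter_mset (\<lambda>a. fst a \<le> fst x \<and> snd a \<le> snd x) A"

definition average_fixed_point :: "pt multiset \<Rightarrow> pt \<Rightarrow> bool" where
  "average_fixed_point A x \<longleftrightarrow>
     (\<exists>B. B \<subseteq># A_le_le A x - A_lt_lt A x \<and>
          (A - A_le_le A x) + B \<noteq> {#} \<and>
          avg ((A - A_le_le A x) + B) = x)"

end

theory Submission
  imports Defs
begin

text \<open>Let \<open>D\<close> be the averaged multiset and suppose \<open>x\<^sub>1 < x\<^sub>2\<close>. \<open>D\<close> agrees with \<open>A\<close> outside the
  closed quadrant \<open>{p. p \<le> x}\<close>, has no points in its interior and at most those of \<open>A\<close> on
  its boundary. If \<open>p\<^sub>1 > p\<^sub>2\<close> and \<open>p \<le> x\<close>, the mirror image \<open>(p\<^sub>2, p\<^sub>1)\<close> lies in the interior.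
  Hence, by the symmetry of \<open>A\<close>, every point below the diagonal is at least as frequent in \<open>D\<close>
  as its mirror image, which forces \<open>\<Sum>\<^sub>D (p\<^sub>1 - p\<^sub>2) \<ge> 0\<close>; but this sum is \<open>|D| (x\<^sub>1 - x\<^sub>2) < 0\<close>.
  Weighting with \<open>x\<^sub>2 - x\<^sub>1\<close> handles the mirror case \<open>x\<^sub>2 < x\<^sub>1\<close> at the same time.\<close>

lemma sum_mset_eq_sum_count:
  fixes f :: "'a \<Rightarrow> 'b::semiring_1"
  assumes "finite S" "set_mset M \<subseteq> S"
  shows "(\<Sum>a\<in>#M. f a) = (\<Sum>p\<in>S. of_nat (count M p) * f p)"
  using assms(2)
proof (induction M)
  case empty
  then show ?case by simp
next
  case (add a M)
  then have "a \<in> S" "(\<Sum>a\<in>#M. f a) = (\<Sum>p\<in>S. of_nat (count M p) * f p)"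
    by auto
  moreover have "(\<Sum>p\<in>S. of_nat (count (add_mset a M) p) * f p)
      = (\<Sum>p\<in>S. of_nat (count M p) * f p + (if p = a then f p else 0))"
    by (rule sum.cong) (auto simp: algebra_simps)
  ultimately show ?case
    using assms(1) by (simp add: sum.distrib add.commute)
qed

lemma sum_mset_nonneg_if_dominates_involution:
  fixes M :: "'a multiset" and \<sigma> :: "'a \<Rightarrow> 'a" and f :: "'a \<Rightarrow> 'b::linordered_idom"
  assumes involution: "\<And>p. \<sigma> (\<sigma> p) = p"
    and odd: "\<And>p. f (\<sigma> p) = - f p"
    and dominates: "\<And>p. f p > 0 \<Longrightarrow> count M (\<sigma> p) \<le> count M p"
  shows "0 \<le> (\<Sum>a\<in>#M. f a)"
proof -
  define S where "S = set_mset M \<union> \<sigma> ` set_mset M"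
  have fin: "finite S" and sub: "set_mset M \<subseteq> S"
    unfolding S_def by auto
  have "(\<Sum>a\<in>#M. f a) = (\<Sum>p\<in>S. of_nat (count M p) * f p)"
    using fin sub by (rule sum_mset_eq_sum_count)
  also have "\<dots> = (\<Sum>p\<in>S. of_nat (count M (\<sigma> p)) * f (\<sigma> p))"
    by (rule sum.reindex_bij_witness[where i = \<sigma> and j = \<sigma>])
       (auto simp: S_def involution image_iff)
  finally have mirrored: "(\<Sum>a\<in>#M. f a) = - (\<Sum>p\<in>S. of_nat (count M (\<sigma> p)) * f p)"
    by (simp add: odd sum_negf)
  have "(\<Sum>p\<in>S. of_nat (count M p) * f p) = (\<Sum>a\<in>#M. f a)"
    using fin sub by (rule sum_mset_eq_sum_count[symmetric])
  with mirrored have "2 * (\<Sum>a\<in>#M. f a)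
      = (\<Sum>p\<in>S. (of_nat (count M p) - of_nat (count M (\<sigma> p))) * f p)"
    by (simp add: algebra_simps sum_subtractf)
  also have "\<dots> \<ge> 0"
  proof (rule sum_nonneg)
    fix p
    consider "f p > 0" | "f p = 0" | "f (\<sigma> p) > 0"
      using odd[of p] by fastforce
    then show "0 \<le> (of_nat (count M p) - of_nat (count M (\<sigma> p))) * f p"
    proof cases
      case 3
      then have "count M p \<le> count M (\<sigma> p)"
        using dominates[of "\<sigma> p"] by (simp add: involution)
      with 3 show ?thesis
        by (simp add: odd mult_nonpos_nonpos)
    qed (use dominates in simp_all)
  qed
  finally show ?thesis by simp
qed

lemma sum_mset_coordinate_difference_avg:
  assumes "M \<noteq> {#}"
  shows "(\<Sum>a\<in>#M. fst a - snd a) = real (size M) * (fst (avg M) - snd (avg M))"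
proof -
  have "(\<Sum>a\<in>#M. fst a - snd a) = (\<Sum>a\<in>#M. fst a) - (\<Sum>a\<in>#M. snd a)"
    by (induction M) simp_all
  moreover have "size M > 0"
    using assms by (simp add: nonempty_has_size)
  ultimately show ?thesis
    by (simp add: avg_def field_simps)
qed

lemma symmetric_ms_count_swap:
  "symmetric_ms A \<Longrightarrow> count A (prod.swap p) = count A p"
  unfolding symmetric_ms_def by (cases p) simp

definition averaged_mset :: "pt multiset \<Rightarrow> pt \<Rightarrow> pt multiset \<Rightarrow> pt multiset" where
  "averaged_mset A x B = (A - A_le_le A x) + B"

context
  fixes A B :: "pt multiset" and x :: pt
  assumes boundary: "B \<subseteq># A_le_le A x - A_lt_lt A x"
begin

lemma count_boundary_part:
  "count B p \<le> (if fst p \<le> fst x \<and> snd p \<le> snd x \<and> \<not> (fst p < fst x \<and> snd p < snd x)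
                 then count A p else 0)"
  using mset_subset_eq_count[OF boundary, of p]
  unfolding A_le_le_def A_lt_lt_def by (auto split: if_splits)

lemma count_averaged_mset:
  "count (averaged_mset A x B) p =
     (if fst p \<le> fst x \<and> snd p \<le> snd x then count B p else count A p)"
  using count_boundary_part[of p]
  unfolding averaged_mset_def A_le_le_def by (auto split: if_splits)

lemma count_averaged_mset_le: "count (averaged_mset A x B) p \<le> count A p"
  using count_boundary_part[of p] by (auto simp: count_averaged_mset split: if_splits)

lemma count_averaged_mset_open_quadrant:
  "fst p < fst x \<Longrightarrow> snd p < snd x \<Longrightarrow> count (averaged_mset A x B) p = 0"
  using count_boundary_part[of p] by (simp add: count_averaged_mset)

lemma averaged_mset_dominates_swap:
  assumes sym: "symmetric_ms A"
    and opposite_sides: "(fst p - snd p) * (snd x - fst x) > 0"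
  shows "count (averaged_mset A x B) (prod.swap p) \<le> count (averaged_mset A x B) p"
proof (cases "fst p \<le> fst x \<and> snd p \<le> snd x")
  case True
  \<comment> \<open>\<open>p \<le> x\<close> with \<open>p\<close> and \<open>x\<close> on opposite sides of the diagonal puts the mirror image of \<open>p\<close> strictly below \<open>x\<close>\<close>
  with opposite_sides have "snd p < fst x \<and> fst p < snd x"
    by (auto simp: zero_less_mult_iff)
  then show ?thesis
    using count_averaged_mset_open_quadrant[of "prod.swap p"] by simp
next
  case False
  then have "count (averaged_mset A x B) p = count A p"
    by (simp add: count_averaged_mset[of p] False)
  then show ?thesis
    using count_averaged_mset_le[of "prod.swap p"] by (simp add: symmetric_ms_count_swap[OF sym])
qed

end

theorem corollary1:
  fixes A :: "(real \<times> real) multiset" and x :: "real \<times> real"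
  assumes "\<forall>a\<in>#A. in_unit_square a"
    and "symmetric_ms A"
    and "in_unit_square x"
    and "average_fixed_point A x"
  shows "fst x = snd x"
proof (rule ccontr)
  assume off_diagonal: "fst x \<noteq> snd x"
  obtain B where B: "B \<subseteq># A_le_le A x - A_lt_lt A x"
    and nonempty: "averaged_mset A x B \<noteq> {#}" and fixed: "avg (averaged_mset A x B) = x"
    using assms(4) unfolding average_fixed_point_def averaged_mset_def by blast
  define D where "D = averaged_mset A x B"
  define f where "f p = (fst p - snd p) * (snd x - fst x)" for p :: pt
  have "0 \<le> (\<Sum>a\<in>#D. f a)"
    unfolding D_def
    by (rule sum_mset_nonneg_if_dominates_involution[where \<sigma> = prod.swap])
       (auto simp: f_def algebra_simps averaged_mset_dominates_swap[OF B assms(2)])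
  also have "(\<Sum>a\<in>#D. f a) = (\<Sum>a\<in>#D. fst a - snd a) * (snd x - fst x)"
    by (simp add: f_def sum_mset_distrib_right)
  also have "\<dots> = real (size D) * ((fst x - snd x) * (snd x - fst x))"
    using sum_mset_coordinate_difference_avg[of D] nonempty fixed by (simp add: D_def)
  also have "\<dots> < 0"
  proof (rule mult_pos_neg)
    show "0 < real (size D)"
      using nonempty by (simp add: D_def nonempty_has_size)
    show "(fst x - snd x) * (snd x - fst x) < 0"
      using off_diagonal by (cases "fst x < snd x") (auto intro: mult_pos_neg mult_neg_pos)
  qed
  finally show False by simp
qed

end
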